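(* Let $G$ be a connected graph with $n$ vertices, $k$ a positive integer, $\tau=\{1,\dots,k\}$, and $f:\tau\to\mathbb{Q}_{\ge1}$ a fitness function with $f(1)<f(2)<\dots<f(k)$. Let $M_0\in\Omega_0(G,\tau)$ and $M=M(G,\tau,f,M_0)$. Then for every $j\in\{2,\dots,k\}$, $\mathbb{E}(A_{\ge j})\le\sum_{i=j}^k\frac{f(i)}{f(i)-f(i-1)}(n+1)n^3$.
   Context: For $G=(V,E)$, $N(v)$ is the neighbourhood of $v$. For a state $S:V\to\tau$, $S|_{v\to w}$ equals $S$ except $w$ gets type $S(v)$. The Moran process $M(G,\tau,f,M_0)$: Markov chain on states from $M_0$; given $M_t$, choose $v$ with probability $f(M_t(v))/\sum_uf(M_t(u))$, then $w\in N(v)$ uniformly, set $M_{t+1}=M_t|_{v\to w}$. $V_i(t)=\{v:M_t(v)=i\}$. $\Omega_0(G,\tau)$ is the set of states with range $\tau$. For $j\in\{2,\dots,k\}$, $A_{\ge j}=\min\{t\in\mathbb{Z}_{\ge0}: \bigcup_{i\ge j}V_i(t)=\emptyset \text{ or } V_i(t)=V\text{ for some } i\ge j\}$. *)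

theory Defs
  imports "HOL-Probability.Probability"
begin

text \<open>A graph is given by a finite vertex set V and a symmetric irreflexive
  edge relation E on V. States are maps from vertices to types (natural numbers);
  only the values on V matter.\<close>

definition simple_graph :: "'a set \<Rightarrow> ('a \<Rightarrow> 'a \<Rightarrow> bool) \<Rightarrow> bool" where
  "simple_graph V E \<longleftrightarrow> finite V \<and> (\<forall>u v. E u v \<longrightarrow> u \<in> V \<and> v \<in> V)
     \<and> (\<forall>u v. E u v \<longrightarrow> E v u) \<and> (\<forall>v. \<not> E v v)"

definition connected_graph :: "'a set \<Rightarrow> ('a \<Rightarrow> 'a \<Rightarrow> bool) \<Rightarrow> bool" where
  "connected_graph V E \<longleftrightarrow> V \<noteq> {} \<and> (\<forall>u\<in>V. \<forall>v\<in>V. E\<^sup>*\<^sup>* u v)"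

definition nbhd :: "'a set \<Rightarrow> ('a \<Rightarrow> 'a \<Rightarrow> bool) \<Rightarrow> 'a \<Rightarrow> 'a set" where
  "nbhd V E v = {w \<in> V. E v w}"

definition Omega0 :: "'a set \<Rightarrow> nat \<Rightarrow> ('a \<Rightarrow> nat) set" where
  "Omega0 V k = {S. \<forall>v\<in>V. S v \<in> {1..k}}"

definition moran_step :: "'a set \<Rightarrow> ('a \<Rightarrow> 'a \<Rightarrow> bool) \<Rightarrow> (nat \<Rightarrow> rat) \<Rightarrow> ('a \<Rightarrow> nat) \<Rightarrow> ('a \<Rightarrow> nat) pmf" where
  "moran_step V E f S =
     bind_pmf (embed_pmf (\<lambda>v. if v \<in> V then real_of_rat (f (S v)) / (\<Sum>u\<in>V. real_of_rat (f (S u))) else 0))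
       (\<lambda>v. bind_pmf (pmf_of_set (nbhd V E v)) (\<lambda>w. return_pmf (S(w := S v))))"

primrec moran_paths :: "'a set \<Rightarrow> ('a \<Rightarrow> 'a \<Rightarrow> bool) \<Rightarrow> (nat \<Rightarrow> rat) \<Rightarrow> ('a \<Rightarrow> nat) \<Rightarrow> nat \<Rightarrow> ('a \<Rightarrow> nat) list pmf" where
  "moran_paths V E f M0 0 = return_pmf [M0]"
| "moran_paths V E f M0 (Suc t) =
     bind_pmf (moran_paths V E f M0 t) (\<lambda>xs. map_pmf (\<lambda>y. xs @ [y]) (moran_step V E f (last xs)))"

definition stop_ge :: "'a set \<Rightarrow> nat \<Rightarrow> ('a \<Rightarrow> nat) \<Rightarrow> bool" where
  "stop_ge V j S \<longleftrightarrow> {v \<in> V. S v \<ge> j} = {} \<or> (\<exists>i\<ge>j. {v \<in> V. S v = i} = V)"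

text \<open>Expectation of the hitting time A_{>=j} (a random variable with values in
  nat \<union> {\<infinity>}), via E(A) = sum_{t>=0} P(A > t), where A > t iff the stopping
  condition fails at all times 0..t.\<close>
definition expected_A_ge :: "'a set \<Rightarrow> ('a \<Rightarrow> 'a \<Rightarrow> bool) \<Rightarrow> (nat \<Rightarrow> rat) \<Rightarrow> ('a \<Rightarrow> nat) \<Rightarrow> nat \<Rightarrow> ennreal" where
  "expected_A_ge V E f M0 j =
     (\<Sum>t. ennreal (measure_pmf.prob (moran_paths V E f M0 t)
                       {xs. \<forall>s\<le>t. \<not> stop_ge V j (xs ! s)}))"

end

theory Submission
  imports Defs
begin

text \<open>
  The proof is an additive drift argument. Give each type \<open>i \<in> {j..k}\<close> the weight
  \<open>c i = f i / (f i - f (i - 1))\<close>, let \<open>g a\<close> be the sum of the \<open>c i\<close> with \<open>j \<le> i \<le> a\<close>, and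
  consider the potential \<open>\<Psi> S = \<Sum>x\<in>V. g (S x) / deg x\<close>. One Moran step increases \<open>\<Psi>\<close> in
  expectation by \<open>1 / (2 W)\<close> times the sum over oriented edges \<open>vw\<close> of
  \<open>(f (S v) - f (S w)) (g (S v) - g (S w)) / (deg v deg w)\<close>, where \<open>W\<close> is the total fitness;
  every term is nonnegative because \<open>f\<close> and \<open>g\<close> are both increasing. Before \<open>A\<^sub>\<ge>\<^sub>j\<close>,
  some vertex of maximal type \<open>m \<ge> j\<close> has a neighbour of smaller type, and the choice of
  \<open>c m\<close> makes this edge contribute at least \<open>f m / n\<^sup>2\<close>, while \<open>W \<le> n f m\<close>. So \<open>\<Psi>\<close> grows
  by at least \<open>1 / n\<^sup>3\<close> per step in expectation, and since \<open>0 \<le> \<Psi> \<le> n \<Sum>c i\<close> the expected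
  stopping time is at most \<open>n\<^sup>4 \<Sum>c i\<close>.
\<close>

section \<open>Additive drift\<close>

lemma integrable_measure_pmf_bounded:
  fixes h :: "'a \<Rightarrow> real"
  assumes "\<And>x. \<bar>h x\<bar> \<le> B"
  shows "integrable (measure_pmf M) h"
  by (rule measure_pmf.integrable_const_bound[where B = B]) (simp_all add: assms)

lemma expectation_bind_pmf_bounded:
  fixes h :: "'b \<Rightarrow> real"
  assumes "\<And>y. \<bar>h y\<bar> \<le> B"
  shows "measure_pmf.expectation (M \<bind> N) h
       = measure_pmf.expectation M (\<lambda>x. measure_pmf.expectation (N x) h)"
  unfolding measure_pmf_bind
proof (rule integral_bind[where K = "count_space UNIV" and B = B and B' = 1])
  show "(\<lambda>x. measure_pmf (N x)) \<in> measure_pmf M \<rightarrow>\<^sub>M subprob_algebra (count_space UNIV)"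
    by (subst measurable_cong_sets[OF sets_measure_pmf_count_space refl])
       (rule measurable_measure_pmf)
qed (simp_all add: assms measure_pmf.finite_measure_axioms measure_pmf.emeasure_space_1)

primrec trajectory :: "('s \<Rightarrow> 's pmf) \<Rightarrow> 's \<Rightarrow> nat \<Rightarrow> 's list pmf" where
  "trajectory K x 0 = return_pmf [x]"
| "trajectory K x (Suc t) = trajectory K x t \<bind> (\<lambda>xs. map_pmf (\<lambda>y. xs @ [y]) (K (last xs)))"

lemma length_trajectory:
  "xs \<in> set_pmf (trajectory K x t) \<Longrightarrow> length xs = Suc t"
  by (induction t arbitrary: xs) auto

lemma last_trajectory:
  assumes "xs \<in> set_pmf (trajectory K x t)"
  shows "xs \<noteq> []" and "last xs = xs ! t"
  using length_trajectory[OF assms] by (metis Zero_not_Suc diff_Suc_1 last_conv_nth list.size(3))+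

lemma trajectory_invariant:
  assumes "x \<in> \<Omega>" and "\<forall>s\<in>\<Omega>. set_pmf (K s) \<subseteq> \<Omega>"
  shows "xs \<in> set_pmf (trajectory K x t) \<Longrightarrow> set xs \<subseteq> \<Omega>"
proof (induction t arbitrary: xs)
  case (Suc t)
  then obtain ys y where ys: "ys \<in> set_pmf (trajectory K x t)"
    and y: "y \<in> set_pmf (K (last ys))" and xs: "xs = ys @ [y]"
    by auto
  have "last ys \<in> \<Omega>"
    using Suc.IH[OF ys] last_trajectory(1)[OF ys] last_in_set by blast
  with y assms(2) xs Suc.IH[OF ys] show ?case by auto
qed (use assms(1) in simp)

lemma expectation_trajectory_Suc:
  fixes h :: "'s \<Rightarrow> real"
  assumes "\<And>s. \<bar>h s\<bar> \<le> B"
  shows "measure_pmf.expectation (trajectory K x (Suc t)) (\<lambda>xs. h (last xs))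
       = measure_pmf.expectation (trajectory K x t) (\<lambda>xs. measure_pmf.expectation (K (last xs)) h)"
  by (simp add: expectation_bind_pmf_bounded[where B = B] assms)

lemma expectation_trajectory_drift:
  fixes \<Phi> :: "'s \<Rightarrow> real"
  assumes "x \<in> \<Omega>" and "\<forall>s\<in>\<Omega>. set_pmf (K s) \<subseteq> \<Omega>"
    and bounds: "\<forall>s. 0 \<le> \<Phi> s \<and> \<Phi> s \<le> B"
    and drift: "\<forall>s\<in>\<Omega>. \<Phi> s + (if P s then 0 else \<delta>) \<le> measure_pmf.expectation (K s) \<Phi>"
    and "0 \<le> \<delta>"
  shows "measure_pmf.expectation (trajectory K x t) (\<lambda>xs. \<Phi> (last xs))
         + \<delta> * measure_pmf.prob (trajectory K x t) {xs. \<forall>s\<le>t. \<not> P (xs ! s)}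
       \<le> measure_pmf.expectation (trajectory K x (Suc t)) (\<lambda>xs. \<Phi> (last xs))"
proof -
  let ?D = "trajectory K x t" and ?A = "{xs. \<forall>s\<le>t. \<not> P (xs ! s)}"
  have abs_\<Phi>: "\<bar>\<Phi> s\<bar> \<le> B" for s
    using bounds by (simp add: abs_le_iff)
  have step_bounds: "\<bar>measure_pmf.expectation (K s) \<Phi>\<bar> \<le> B" for s
  proof -
    have "integrable (measure_pmf (K s)) \<Phi>"
      by (rule integrable_measure_pmf_bounded[OF abs_\<Phi>])
    then show ?thesis
      using bounds measure_pmf.integral_ge_const[of _ \<Phi> 0] measure_pmf.integral_le_const[of _ \<Phi> B]
      by (simp add: abs_le_iff)
  qed
  have pointwise: "\<Phi> (last xs) + \<delta> * indicator ?A xs \<le> measure_pmf.expectation (K (last xs)) \<Phi>"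
    if "xs \<in> set_pmf ?D" for xs
  proof -
    have "last xs \<in> \<Omega>"
      using trajectory_invariant[OF assms(1,2) that] last_trajectory(1)[OF that] last_in_set by blast
    then have "\<Phi> (last xs) + (if P (last xs) then 0 else \<delta>) \<le> measure_pmf.expectation (K (last xs)) \<Phi>"
      using drift by blast
    moreover have "\<delta> * indicator ?A xs \<le> (if P (last xs) then 0 else \<delta>)"
      using last_trajectory(2)[OF that] \<open>0 \<le> \<delta>\<close> by (auto simp: indicator_def)
    ultimately show ?thesis by linarith
  qed
  have int_\<Phi>: "integrable (measure_pmf ?D) (\<lambda>xs. \<Phi> (last xs))"
    by (rule integrable_measure_pmf_bounded[OF abs_\<Phi>])
  have int_A: "integrable (measure_pmf ?D) (\<lambda>xs. \<delta> * indicator ?A xs)"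
    by (rule integrable_measure_pmf_bounded[where B = "\<bar>\<delta>\<bar>"]) (simp add: indicator_def)
  have "measure_pmf.expectation ?D (\<lambda>xs. \<Phi> (last xs)) + \<delta> * measure_pmf.prob ?D ?A
      = measure_pmf.expectation ?D (\<lambda>xs. \<Phi> (last xs) + \<delta> * indicator ?A xs)"
    using Bochner_Integration.integral_add[OF int_\<Phi> int_A] by simp
  also have "\<dots> \<le> measure_pmf.expectation ?D (\<lambda>xs. measure_pmf.expectation (K (last xs)) \<Phi>)"
    by (intro integral_mono_AE AE_pmfI pointwise integrable_measure_pmf_bounded[OF step_bounds]
          Bochner_Integration.integrable_add int_\<Phi> int_A)
  also have "\<dots> = measure_pmf.expectation (trajectory K x (Suc t)) (\<lambda>xs. \<Phi> (last xs))"
    by (rule expectation_trajectory_Suc[OF abs_\<Phi>, symmetric])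
  finally show ?thesis .
qed

theorem additive_drift:
  fixes \<Phi> :: "'s \<Rightarrow> real"
  assumes "x \<in> \<Omega>" and "\<forall>s\<in>\<Omega>. set_pmf (K s) \<subseteq> \<Omega>"
    and bounds: "\<forall>s. 0 \<le> \<Phi> s \<and> \<Phi> s \<le> B"
    and drift: "\<forall>s\<in>\<Omega>. \<Phi> s + (if P s then 0 else \<delta>) \<le> measure_pmf.expectation (K s) \<Phi>"
    and "0 < \<delta>"
  shows "(\<Sum>t. ennreal (measure_pmf.prob (trajectory K x t) {xs. \<forall>s\<le>t. \<not> P (xs ! s)})) \<le> ennreal (B / \<delta>)"
proof -
  define a where "a t = measure_pmf.expectation (trajectory K x t) (\<lambda>xs. \<Phi> (last xs))" for t
  define p where "p t = measure_pmf.prob (trajectory K x t) {xs. \<forall>s\<le>t. \<not> P (xs ! s)}" for t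
  have a_bounds: "0 \<le> a t \<and> a t \<le> B" for t
    unfolding a_def using bounds
    by (auto intro!: measure_pmf.integral_ge_const measure_pmf.integral_le_const
        integrable_measure_pmf_bounded[where B = B])
  have growth: "a 0 + \<delta> * (\<Sum>s<t. p s) \<le> a t" for t
  proof (induction t)
    case (Suc t)
    then show ?case
      using expectation_trajectory_drift[OF assms(1-4) less_imp_le[OF \<open>0 < \<delta>\<close>], of t]
      by (simp add: a_def p_def distrib_left)
  qed simp
  have "\<delta> * (\<Sum>s<t. p s) \<le> B" for t
    using growth[of t] a_bounds[of 0] a_bounds[of t] by linarith
  then have partial_sums: "(\<Sum>s<t. p s) \<le> B / \<delta>" for t
    using \<open>0 < \<delta>\<close> by (simp add: pos_le_divide_eq mult.commute)
  have p_nonneg: "0 \<le> p t" for t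
    by (simp add: p_def)
  have "summable p"
    by (intro bounded_imp_summable[where B = "B / \<delta>"] p_nonneg)
       (metis partial_sums lessThan_Suc_atMost)
  then have "(\<Sum>t. ennreal (p t)) = ennreal (\<Sum>t. p t)"
    by (rule suminf_ennreal2[OF p_nonneg])
  also have "\<dots> \<le> ennreal (B / \<delta>)"
    by (intro ennreal_leI suminf_le_const \<open>summable p\<close> partial_sums)
  finally show ?thesis
    by (simp add: p_def)
qed

section \<open>The Moran step on a connected graph\<close>

lemma moran_paths_eq_trajectory: "moran_paths V E f M0 t = trajectory (moran_step V E f) M0 t"
  by (induction t) simp_all

lemma stop_ge_singleton: "stop_ge {x} j S"
  unfolding stop_ge_def by (cases "j \<le> S x") auto

lemma rtranclp_crossing_edge:
  "R\<^sup>*\<^sup>* u y \<Longrightarrow> P u \<Longrightarrow> \<not> P y \<Longrightarrow> \<exists>a b. R a b \<and> P a \<and> \<not> P b"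
  by (induction rule: rtranclp_induct) auto

locale moran_graph =
  fixes V :: "'a set" and E :: "'a \<Rightarrow> 'a \<Rightarrow> bool"
  assumes simple: "simple_graph V E" and connected: "connected_graph V E"
    and two_le_card: "2 \<le> card V"
begin

lemma finite_V: "finite V"
  using simple by (simp add: simple_graph_def)

lemma edge_in_V: "E u v \<Longrightarrow> u \<in> V \<and> v \<in> V"
  using simple by (simp add: simple_graph_def)

lemma edge_sym: "E u v \<Longrightarrow> E v u"
  using simple by (simp add: simple_graph_def)

lemma edge_irrefl: "\<not> E v v"
  using simple by (simp add: simple_graph_def)

lemma nbhd_subset: "nbhd V E v \<subseteq> V"
  by (auto simp: nbhd_def)

lemma finite_nbhd: "finite (nbhd V E v)"
  using finite_subset[OF nbhd_subset finite_V] .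

lemma nbhd_nonempty:
  assumes "v \<in> V"
  shows "nbhd V E v \<noteq> {}"
proof -
  have "V \<noteq> {v}"
    using two_le_card by auto
  then obtain y where y: "y \<in> V" "y \<noteq> v"
    using assms by blast
  then have "E\<^sup>*\<^sup>* v y"
    using connected assms by (simp add: connected_graph_def)
  then obtain z where "E v z"
    using y(2) by (metis converse_rtranclpE)
  then show ?thesis
    using edge_in_V by (auto simp: nbhd_def)
qed

definition deg :: "'a \<Rightarrow> real" where
  "deg v = real (card (nbhd V E v))"

lemma deg_bounds: "v \<in> V \<Longrightarrow> 1 \<le> deg v \<and> deg v \<le> card V"
  using nbhd_nonempty finite_nbhd card_mono[OF finite_V nbhd_subset]
  by (simp add: deg_def Suc_le_eq card_gt_0_iff)

lemma deg_pos: "v \<in> V \<Longrightarrow> 0 < deg v"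
  using deg_bounds[of v] by simp

lemma sum_nbhd_swap:
  "(\<Sum>v\<in>V. \<Sum>w\<in>nbhd V E v. h v w) = (\<Sum>v\<in>V. \<Sum>w\<in>nbhd V E v. (h w v :: real))"
proof -
  have fin: "\<forall>v\<in>V. finite (nbhd V E v)"
    using finite_nbhd by blast
  have swap: "prod.swap ` Sigma V (nbhd V E) = Sigma V (nbhd V E)"
    by (auto simp: nbhd_def image_iff intro: edge_sym)
  have "(\<Sum>v\<in>V. \<Sum>w\<in>nbhd V E v. h v w) = (\<Sum>(v, w)\<in>Sigma V (nbhd V E). h v w)"
    by (rule sum.Sigma[OF finite_V fin])
  also have "\<dots> = (\<Sum>(v, w)\<in>prod.swap ` Sigma V (nbhd V E). h w v)"
    by (subst sum.reindex) (auto simp: case_prod_beta)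
  also have "\<dots> = (\<Sum>v\<in>V. \<Sum>w\<in>nbhd V E v. h w v)"
    unfolding swap by (rule sum.Sigma[OF finite_V fin, symmetric])
  finally show ?thesis .
qed

definition potential :: "(nat \<Rightarrow> real) \<Rightarrow> ('a \<Rightarrow> nat) \<Rightarrow> real" where
  "potential g S = (\<Sum>x\<in>V. g (S x) / deg x)"

lemma potential_upd:
  assumes "w \<in> V"
  shows "potential g (S(w := a)) = potential g S + (g a - g (S w)) / deg w"
proof -
  have "potential g (S(w := a)) = g a / deg w + (\<Sum>x\<in>V - {w}. g (S x) / deg x)"
    and "potential g S = g (S w) / deg w + (\<Sum>x\<in>V - {w}. g (S x) / deg x)"
    unfolding potential_def using assms finite_V by (simp_all add: sum.remove)
  then show ?thesis
    by (simp add: diff_divide_distrib)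
qed

definition reproduction_weight :: "(nat \<Rightarrow> rat) \<Rightarrow> ('a \<Rightarrow> nat) \<Rightarrow> 'a \<Rightarrow> real" where
  "reproduction_weight f S v =
     (if v \<in> V then real_of_rat (f (S v)) / (\<Sum>u\<in>V. real_of_rat (f (S u))) else 0)"

lemma moran_step_eq_bind:
  "moran_step V E f S = embed_pmf (reproduction_weight f S)
     \<bind> (\<lambda>v. pmf_of_set (nbhd V E v) \<bind> (\<lambda>w. return_pmf (S(w := S v))))"
  unfolding moran_step_def reproduction_weight_def ..

lemma
  assumes "\<forall>v\<in>V. 0 < f (S v)"
  shows pmf_reproduction_weight: "pmf (embed_pmf (reproduction_weight f S)) v = reproduction_weight f S v"
    and set_pmf_reproduction_weight: "set_pmf (embed_pmf (reproduction_weight f S)) = V"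
proof -
  have total_pos: "0 < (\<Sum>u\<in>V. real_of_rat (f (S u)))"
    using assms finite_V two_le_card by (intro sum_pos) auto
  have nonneg: "0 \<le> reproduction_weight f S v" for v
    using assms total_pos by (auto simp: reproduction_weight_def less_imp_le)
  have "(\<integral>\<^sup>+v. ennreal (reproduction_weight f S v) \<partial>count_space UNIV)
      = (\<Sum>v\<in>V. ennreal (reproduction_weight f S v))"
    by (rule nn_integral_count_space') (auto simp: finite_V reproduction_weight_def)
  also have "\<dots> = ennreal (\<Sum>v\<in>V. reproduction_weight f S v)"
    using nonneg by (simp add: sum_ennreal)
  also have "(\<Sum>v\<in>V. reproduction_weight f S v) = 1"
    using total_pos by (simp add: reproduction_weight_def sum_divide_distrib[symmetric])
  finally have prob: "(\<integral>\<^sup>+v. ennreal (reproduction_weight f S v) \<partial>count_space UNIV) = 1"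
    by simp
  show "pmf (embed_pmf (reproduction_weight f S)) v = reproduction_weight f S v"
    by (rule pmf_embed_pmf[OF nonneg prob])
  have "{v. reproduction_weight f S v \<noteq> 0} = V"
    using assms total_pos by (auto simp: reproduction_weight_def)
  then show "set_pmf (embed_pmf (reproduction_weight f S)) = V"
    using set_embed_pmf[OF nonneg prob] by simp
qed

lemma set_pmf_moran_step:
  assumes "\<forall>v\<in>V. 0 < f (S v)"
  shows "set_pmf (moran_step V E f S) = {S(w := S v) |v w. v \<in> V \<and> w \<in> nbhd V E v}"
proof -
  have "set_pmf (moran_step V E f S) = (\<Union>v\<in>V. \<Union>w\<in>nbhd V E v. {S(w := S v)})"
    by (simp add: moran_step_eq_bind set_pmf_reproduction_weight[OF assms] nbhd_nonempty finite_nbhd)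
  then show ?thesis
    by blast
qed

lemma expectation_moran_step:
  fixes h :: "('a \<Rightarrow> nat) \<Rightarrow> real"
  assumes "\<forall>v\<in>V. 0 < f (S v)"
  shows "measure_pmf.expectation (moran_step V E f S) h
       = (\<Sum>v\<in>V. real_of_rat (f (S v)) * (\<Sum>w\<in>nbhd V E v. h (S(w := S v))) / deg v)
           / (\<Sum>u\<in>V. real_of_rat (f (S u)))"
proof -
  have "measure_pmf.expectation (moran_step V E f S) h
      = (\<Sum>v\<in>V. reproduction_weight f S v * ((\<Sum>w\<in>nbhd V E v. h (S(w := S v))) / deg v))"
    unfolding moran_step_eq_bind
  proof (subst pmf_expectation_bind[of V])
    show "finite (set_pmf (pmf_of_set (nbhd V E v) \<bind> (\<lambda>w. return_pmf (S(w := S v)))))"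
      if "v \<in> V" for v
      using that nbhd_nonempty finite_nbhd by simp
  qed (simp_all add: finite_V set_pmf_reproduction_weight[OF assms] pmf_reproduction_weight[OF assms]
        pmf_expectation_bind_pmf_of_set nbhd_nonempty finite_nbhd deg_def sum_distrib_left
        divide_inverse_commute)
  also have "\<dots> = (\<Sum>v\<in>V. real_of_rat (f (S v)) * (\<Sum>w\<in>nbhd V E v. h (S(w := S v))) / deg v)
           / (\<Sum>u\<in>V. real_of_rat (f (S u)))"
    by (subst sum_divide_distrib, rule sum.cong) (simp_all add: reproduction_weight_def)
  finally show ?thesis .
qed

definition edge_gain :: "(nat \<Rightarrow> rat) \<Rightarrow> (nat \<Rightarrow> real) \<Rightarrow> ('a \<Rightarrow> nat) \<Rightarrow> 'a \<Rightarrow> 'a \<Rightarrow> real" where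
  "edge_gain f g S v w =
     (real_of_rat (f (S v)) - real_of_rat (f (S w))) * (g (S v) - g (S w)) / (deg v * deg w)"

definition potential_gain :: "(nat \<Rightarrow> rat) \<Rightarrow> (nat \<Rightarrow> real) \<Rightarrow> ('a \<Rightarrow> nat) \<Rightarrow> real" where
  "potential_gain f g S = (\<Sum>v\<in>V. \<Sum>w\<in>nbhd V E v. edge_gain f g S v w)"

lemma edge_gain_commute: "edge_gain f g S v w = edge_gain f g S w v"
  by (simp add: edge_gain_def algebra_simps)

text \<open>The one-sided gain \<open>f (S v) (g (S v) - g (S w)) / (deg v deg w)\<close> of a copy \<open>v \<rightarrow> w\<close>
  is symmetrised over the two orientations of each edge, whence \<open>edge_gain\<close> and the factor 2.\<close>
lemma expectation_potential_moran_step: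
  assumes "\<forall>v\<in>V. 0 < f (S v)"
  shows "measure_pmf.expectation (moran_step V E f S) (potential g)
       = potential g S + potential_gain f g S / (2 * (\<Sum>u\<in>V. real_of_rat (f (S u))))"
proof -
  let ?F = "\<lambda>v. real_of_rat (f (S v))"
  let ?gain = "\<lambda>v w. ?F v * (g (S v) - g (S w)) / (deg v * deg w)"
  have total_pos: "0 < (\<Sum>u\<in>V. ?F u)"
    using assms finite_V two_le_card by (intro sum_pos) auto
  have vertex: "?F v * (\<Sum>w\<in>nbhd V E v. potential g (S(w := S v))) / deg v
      = ?F v * potential g S + (\<Sum>w\<in>nbhd V E v. ?gain v w)" if "v \<in> V" for v
  proof -
    have "(\<Sum>w\<in>nbhd V E v. potential g (S(w := S v)))
        = (\<Sum>w\<in>nbhd V E v. potential g S + (g (S v) - g (S w)) / deg w)"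
      using nbhd_subset by (intro sum.cong refl potential_upd) blast
    also have "\<dots> = deg v * potential g S + (\<Sum>w\<in>nbhd V E v. (g (S v) - g (S w)) / deg w)"
      by (simp add: sum.distrib deg_def)
    moreover have "(\<Sum>w\<in>nbhd V E v. ?gain v w)
        = ?F v / deg v * (\<Sum>w\<in>nbhd V E v. (g (S v) - g (S w)) / deg w)"
      by (simp add: sum_distrib_left)
    ultimately show ?thesis
      using deg_bounds[OF that] by (simp add: field_simps)
  qed
  have "2 * (\<Sum>v\<in>V. \<Sum>w\<in>nbhd V E v. ?gain v w)
      = (\<Sum>v\<in>V. \<Sum>w\<in>nbhd V E v. ?gain v w + ?gain w v)"
    using sum_nbhd_swap[of ?gain] by (simp add: sum.distrib)
  also have "\<dots> = potential_gain f g S"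
  proof -
    have "?gain v w + ?gain w v = edge_gain f g S v w" for v w
    proof -
      have "?gain v w + ?gain w v
          = (?F v * (g (S v) - g (S w)) + ?F w * (g (S w) - g (S v))) / (deg v * deg w)"
        by (simp add: add_divide_distrib mult.commute[of "deg w" "deg v"])
      then show ?thesis
        by (simp add: edge_gain_def algebra_simps)
    qed
    then show ?thesis
      unfolding potential_gain_def by simp
  qed
  finally have "(\<Sum>v\<in>V. \<Sum>w\<in>nbhd V E v. ?gain v w) = potential_gain f g S / 2"
    by simp
  then show ?thesis
    using total_pos
    by (simp add: expectation_moran_step[OF assms] vertex sum.distrib
        sum_distrib_right[symmetric] field_simps)
qed

lemma potential_gain_ge_edge_gain:
  assumes nonneg: "\<forall>v\<in>V. \<forall>w\<in>V. 0 \<le> edge_gain f g S v w" and "E a b"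
  shows "2 * edge_gain f g S a b \<le> potential_gain f g S"
proof -
  have fin: "\<forall>v\<in>V. finite (nbhd V E v)"
    using finite_nbhd by blast
  have "a \<noteq> b"
    using \<open>E a b\<close> edge_irrefl by blast
  then have "2 * edge_gain f g S a b = (\<Sum>(v, w)\<in>{(a, b), (b, a)}. edge_gain f g S v w)"
    using edge_gain_commute[of f g S a b] by simp
  also have "\<dots> \<le> (\<Sum>(v, w)\<in>Sigma V (nbhd V E). edge_gain f g S v w)"
    using \<open>E a b\<close> edge_in_V edge_sym nonneg nbhd_subset finite_V fin
    by (intro sum_mono2) (auto simp: nbhd_def)
  also have "\<dots> = potential_gain f g S"
    unfolding potential_gain_def by (rule sum.Sigma[OF finite_V fin, symmetric])
  finally show ?thesis .
qed

lemma unstopped_max_level_edge: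
  assumes "\<not> stop_ge V j S"
  obtains a b where "E a b" and "j \<le> S a" and "S b < S a" and "\<forall>v\<in>V. S v \<le> S a"
proof -
  define m where "m = Max (S ` V)"
  have V_nonempty: "V \<noteq> {}"
    using two_le_card by auto
  have max: "\<forall>v\<in>V. S v \<le> m"
    unfolding m_def using finite_V by simp
  have "m \<in> S ` V"
    unfolding m_def using finite_V V_nonempty by (intro Max_in) auto
  then obtain u where u: "u \<in> V" "S u = m"
    by blast
  have "j \<le> m"
  proof (rule ccontr)
    assume "\<not> j \<le> m"
    then have "{v \<in> V. j \<le> S v} = {}"
      using max by fastforce
    then show False
      using assms by (simp add: stop_ge_def)
  qed
  then have "{v \<in> V. S v = m} \<noteq> V"
    using assms unfolding stop_ge_def by blast
  then obtain y where "y \<in> V" "S y \<noteq> m"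
    by blast
  then obtain a b where ab: "E a b" "S a = m" "S b \<noteq> m"
    using rtranclp_crossing_edge[of E u y "\<lambda>v. S v = m"] connected u
    by (auto simp: connected_graph_def)
  then have "S b < S a"
    using max edge_in_V[OF \<open>E a b\<close>] by (simp add: order.not_eq_order_implies_strict)
  then show ?thesis
    using that ab max \<open>j \<le> m\<close> by simp
qed

end

section \<open>A potential for the types at least j\<close>

locale moran_fitness = moran_graph V E
  for V :: "'a set" and E :: "'a \<Rightarrow> 'a \<Rightarrow> bool" +
  fixes k j :: nat and f :: "nat \<Rightarrow> rat"
  assumes fitness_ge_1: "\<forall>i\<in>{1..k}. 1 \<le> f i"
    and fitness_increasing: "\<forall>i. 1 \<le> i \<and> i < k \<longrightarrow> f i < f (i + 1)"
    and j_range: "j \<in> {2..k}"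
begin

lemma fitness_strict_mono: "1 \<le> a \<Longrightarrow> a < b \<Longrightarrow> b \<le> k \<Longrightarrow> f a < f b"
proof (induction b)
  case (Suc b)
  then have "1 \<le> b" and "b < k"
    by simp_all
  then have "f b < f (Suc b)"
    using fitness_increasing by simp
  with Suc show ?case
    by (cases "a = b") auto
qed simp

lemma fitness_mono: "1 \<le> a \<Longrightarrow> a \<le> b \<Longrightarrow> b \<le> k \<Longrightarrow> f a \<le> f b"
  using fitness_strict_mono by (cases "a = b") (auto simp: order_le_less)

definition level_weight :: "nat \<Rightarrow> real" where
  "level_weight i = real_of_rat (f i / (f i - f (i - 1)))"

definition level_potential :: "nat \<Rightarrow> real" where
  "level_potential a = (\<Sum>i = j..min a k. level_weight i)"

lemma level_weight:
  assumes "i \<in> {j..k}"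
  shows "0 \<le> level_weight i"
    and "level_weight i * (real_of_rat (f i) - real_of_rat (f (i - 1))) = real_of_rat (f i)"
proof -
  have "f (i - 1) < f i"
    using assms j_range by (intro fitness_strict_mono) auto
  moreover have "0 < f i"
    using assms j_range fitness_ge_1 by (auto intro: less_le_trans[of 0 1])
  ultimately show "0 \<le> level_weight i"
    and "level_weight i * (real_of_rat (f i) - real_of_rat (f (i - 1))) = real_of_rat (f i)"
    by (simp_all add: level_weight_def zero_le_of_rat_iff of_rat_mult[symmetric]
        of_rat_diff[symmetric])
qed

lemma level_potential_bounds: "0 \<le> level_potential a \<and> level_potential a \<le> (\<Sum>i = j..k. level_weight i)"
  unfolding level_potential_def using level_weight(1)
  by (auto intro!: sum_nonneg sum_mono2)

lemma level_potential_mono: "a \<le> b \<Longrightarrow> level_potential a \<le> level_potential b"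
  unfolding level_potential_def using level_weight(1)
  by (auto intro!: sum_mono2)

lemma level_potential_gap:
  assumes "m \<in> {j..k}" and "b < m"
  shows "level_weight m \<le> level_potential m - level_potential b"
proof -
  obtain m' where m: "m = Suc m'"
    using assms j_range by (cases m) auto
  have "level_potential b \<le> (\<Sum>i = j..m'. level_weight i)"
    unfolding level_potential_def using assms level_weight(1) m by (auto intro!: sum_mono2)
  moreover have "level_potential m = (\<Sum>i = j..m'. level_weight i) + level_weight m"
    unfolding level_potential_def using assms m by simp
  ultimately show ?thesis
    by simp
qed

lemma potential_bounds:
  "0 \<le> potential level_potential S
   \<and> potential level_potential S \<le> (\<Sum>i = j..k. level_weight i) * card V"
proof
  show "0 \<le> potential level_potential S"
    unfolding potential_def using level_potential_bounds deg_pos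
    by (intro sum_nonneg divide_nonneg_nonneg) (auto intro: less_imp_le)
  have "level_potential (S x) / deg x \<le> (\<Sum>i = j..k. level_weight i)" if "x \<in> V" for x
  proof -
    have "level_potential (S x) / deg x \<le> level_potential (S x)"
      using divide_left_mono[of 1 "deg x" "level_potential (S x)"] level_potential_bounds
        deg_bounds[OF that] by simp
    then show ?thesis
      using level_potential_bounds[of "S x"] by linarith
  qed
  then show "potential level_potential S \<le> (\<Sum>i = j..k. level_weight i) * card V"
    unfolding potential_def using sum_mono[of V _ "\<lambda>_. \<Sum>i = j..k. level_weight i"]
    by (simp add: mult.commute)
qed

lemma fitness_pos: "S \<in> Omega0 V k \<Longrightarrow> \<forall>v\<in>V. 0 < f (S v)"
  using fitness_ge_1 by (auto simp: Omega0_def intro: less_le_trans[of 0 1])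

lemma moran_step_Omega0: "S \<in> Omega0 V k \<Longrightarrow> set_pmf (moran_step V E f S) \<subseteq> Omega0 V k"
  using set_pmf_moran_step[OF fitness_pos] nbhd_subset by (auto simp: Omega0_def)

lemma total_fitness_le:
  assumes "S \<in> Omega0 V k" and "\<forall>v\<in>V. S v \<le> m" and "m \<le> k"
  shows "(\<Sum>u\<in>V. real_of_rat (f (S u))) \<le> card V * real_of_rat (f m)"
proof -
  have "(\<Sum>u\<in>V. real_of_rat (f (S u))) \<le> (\<Sum>u\<in>V. real_of_rat (f m))"
    using assms by (intro sum_mono) (auto simp: Omega0_def of_rat_less_eq intro!: fitness_mono)
  then show ?thesis
    by simp
qed

lemma edge_gain_nonneg:
  assumes "S \<in> Omega0 V k" and "v \<in> V" and "w \<in> V"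
  shows "0 \<le> edge_gain f level_potential S v w"
proof -
  have "S v \<in> {1..k}" and "S w \<in> {1..k}"
    using assms by (auto simp: Omega0_def)
  then have "0 \<le> (real_of_rat (f (S v)) - real_of_rat (f (S w)))
      * (level_potential (S v) - level_potential (S w))"
    using fitness_mono level_potential_mono
    by (cases "S v \<le> S w") (auto intro: mult_nonpos_nonpos mult_nonneg_nonneg simp: of_rat_less_eq)
  then show ?thesis
    unfolding edge_gain_def using deg_pos assms(2,3) by (simp add: divide_nonneg_pos)
qed

text \<open>Across an edge from a vertex of maximal type \<open>m \<ge> j\<close> to a vertex of smaller type, the
  weight \<open>f m / (f m - f (m - 1))\<close> exactly compensates the smallest possible fitness gap.\<close>
lemma edge_gain_max_level_ge:
  assumes "S \<in> Omega0 V k" and "E a b" and "j \<le> S a" and "S b < S a"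
  shows "real_of_rat (f (S a)) / real (card V) ^ 2 \<le> edge_gain f level_potential S a b"
proof -
  let ?F = "\<lambda>i. real_of_rat (f i)" and ?m = "S a"
  have ab: "a \<in> V" "b \<in> V"
    using edge_in_V[OF \<open>E a b\<close>] by auto
  then have m: "?m \<in> {j..k}" and "1 \<le> S b"
    using assms(1,3) by (auto simp: Omega0_def)
  have "S b \<le> ?m - 1" and "?m - 1 \<le> k" and "1 \<le> ?m - 1"
    using assms(4) m j_range by auto
  then have "?F (S b) \<le> ?F (?m - 1)" and "?F (?m - 1) < ?F ?m"
    using fitness_mono[of "S b" "?m - 1"] fitness_strict_mono[of "?m - 1" ?m] \<open>1 \<le> S b\<close> m
    by (simp_all add: of_rat_less_eq of_rat_less)
  have "?F ?m = (?F ?m - ?F (?m - 1)) * level_weight ?m"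
    using level_weight(2)[OF m] by (simp add: mult.commute)
  also have "\<dots> \<le> (?F ?m - ?F (S b)) * (level_potential ?m - level_potential (S b))"
    using \<open>?F (S b) \<le> ?F (?m - 1)\<close> \<open>?F (?m - 1) < ?F ?m\<close> level_weight(1)[OF m]
      level_potential_gap[OF m assms(4)]
    by (intro mult_mono) linarith+
  finally have numerator: "?F ?m \<le> (?F ?m - ?F (S b)) * (level_potential ?m - level_potential (S b))" .
  have "0 < deg a * deg b" and "deg a * deg b \<le> real (card V) ^ 2"
    using deg_bounds[OF ab(1)] deg_bounds[OF ab(2)] by (auto simp: power2_eq_square intro: mult_mono)
  moreover have "1 \<le> ?F ?m"
    using fitness_ge_1 m j_range by (simp add: of_rat_less_eq)
  ultimately have "?F ?m / real (card V) ^ 2 \<le> ?F ?m / (deg a * deg b)"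
    by (intro divide_left_mono) (auto intro: mult_pos_pos less_le_trans)
  also have "\<dots> \<le> edge_gain f level_potential S a b"
    unfolding edge_gain_def using \<open>0 < deg a * deg b\<close> by (intro divide_right_mono numerator) simp
  finally show ?thesis .
qed

lemma potential_drift:
  assumes "S \<in> Omega0 V k"
  shows "potential level_potential S + (if stop_ge V j S then 0 else 1 / real (card V) ^ 3)
       \<le> measure_pmf.expectation (moran_step V E f S) (potential level_potential)"
proof -
  let ?W = "\<Sum>u\<in>V. real_of_rat (f (S u))" and ?gain = "potential_gain f level_potential S"
  have W_pos: "0 < ?W"
    using fitness_pos[OF assms] finite_V two_le_card by (intro sum_pos) auto
  have edges_nonneg: "\<forall>v\<in>V. \<forall>w\<in>V. 0 \<le> edge_gain f level_potential S v w"
    using edge_gain_nonneg[OF assms] by blast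
  then have gain_nonneg: "0 \<le> ?gain"
    unfolding potential_gain_def using nbhd_subset by (intro sum_nonneg) blast
  note expectation = expectation_potential_moran_step[OF fitness_pos[OF assms], of level_potential]
  show ?thesis
  proof (cases "stop_ge V j S")
    case True
    then show ?thesis
      using expectation gain_nonneg W_pos by simp
  next
    case False
    then obtain a b where ab: "E a b" "j \<le> S a" "S b < S a" and max: "\<forall>v\<in>V. S v \<le> S a"
      by (rule unstopped_max_level_edge)
    let ?Fm = "real_of_rat (f (S a))" and ?n = "real (card V)"
    have "S a \<in> {j..k}"
      using assms ab edge_in_V j_range by (auto simp: Omega0_def)
    then have "1 \<le> ?Fm"
      using fitness_ge_1 j_range by (simp add: of_rat_less_eq)
    have "2 * (?Fm / ?n ^ 2) \<le> ?gain"
      using edge_gain_max_level_ge[OF assms ab] potential_gain_ge_edge_gain[OF edges_nonneg ab(1)] by linarith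
    moreover have "?W \<le> ?n * ?Fm"
      using total_fitness_le[OF assms max] \<open>S a \<in> {j..k}\<close> by simp
    moreover have "0 < ?n"
      using two_le_card by simp
    ultimately have "(2 * (?Fm / ?n ^ 2)) / (2 * (?n * ?Fm)) \<le> ?gain / (2 * ?W)"
      using \<open>1 \<le> ?Fm\<close> W_pos gain_nonneg by (intro frac_le) auto
    moreover have "(2 * (?Fm / ?n ^ 2)) / (2 * (?n * ?Fm)) = 1 / ?n ^ 3"
      using \<open>1 \<le> ?Fm\<close> \<open>0 < ?n\<close> by (simp add: field_simps power3_eq_cube power2_eq_square)
    ultimately show ?thesis
      using expectation False by simp
  qed
qed

lemma expected_A_ge_bound:
  assumes "M0 \<in> Omega0 V k"
  shows "expected_A_ge V E f M0 j \<le> ennreal ((\<Sum>i = j..k. level_weight i) * card V * real (card V) ^ 3)"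
proof -
  have "expected_A_ge V E f M0 j
      = (\<Sum>t. ennreal (measure_pmf.prob (trajectory (moran_step V E f) M0 t)
                          {xs. \<forall>s\<le>t. \<not> stop_ge V j (xs ! s)}))"
    unfolding expected_A_ge_def moran_paths_eq_trajectory ..
  also have "\<dots> \<le> ennreal ((\<Sum>i = j..k. level_weight i) * card V / (1 / real (card V) ^ 3))"
    using assms moran_step_Omega0 potential_bounds potential_drift two_le_card
    by (intro additive_drift[where \<Omega> = "Omega0 V k" and \<Phi> = "potential level_potential"]) auto
  finally show ?thesis
    by simp
qed

end

theorem lemma17:
  fixes V :: "'a set" and E :: "'a \<Rightarrow> 'a \<Rightarrow> bool" and k n j :: nat
    and f :: "nat \<Rightarrow> rat" and M0 :: "'a \<Rightarrow> nat"
  assumes "simple_graph V E" and "connected_graph V E" and "n = card V"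
    and "k \<ge> 1"
    and "\<forall>i\<in>{1..k}. f i \<ge> 1"
    and "\<forall>i. 1 \<le> i \<and> i < k \<longrightarrow> f i < f (i + 1)"
    and "M0 \<in> Omega0 V k"
    and "j \<in> {2..k}"
  shows "expected_A_ge V E f M0 j
           \<le> ennreal ((\<Sum>i=j..k. real_of_rat (f i / (f i - f (i - 1)))) * (real n + 1) * real n ^ 3)"
proof (cases "2 \<le> card V")
  case True
  then interpret moran_fitness V E k j f
    using assms by unfold_locales simp_all
  have "expected_A_ge V E f M0 j \<le> ennreal ((\<Sum>i = j..k. level_weight i) * n * real n ^ 3)"
    using expected_A_ge_bound[OF assms(7)] assms(3) by simp
  also have "\<dots> \<le> ennreal ((\<Sum>i = j..k. level_weight i) * (real n + 1) * real n ^ 3)"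
    using level_weight(1) by (intro ennreal_leI mult_right_mono mult_left_mono sum_nonneg) auto
  finally show ?thesis
    by (simp add: level_weight_def)
next
  case False
  moreover have "finite V" and "V \<noteq> {}"
    using assms(1,2) by (simp_all add: simple_graph_def connected_graph_def)
  ultimately have "card V = 1"
    using card_gt_0_iff[of V] by linarith
  then obtain x where "V = {x}"
    by (rule card_1_singletonE)
  \<comment> \<open>Here \<open>moran_step\<close> samples from \<open>pmf_of_set {}\<close>, but every state is stopped, so only the
    expectation of the zero potential is needed.\<close>
  then have "expected_A_ge V E f M0 j \<le> ennreal (0 / 1)"
    unfolding expected_A_ge_def moran_paths_eq_trajectory
    by (intro additive_drift[where \<Omega> = UNIV and \<Phi> = "\<lambda>_. 0"]) (simp_all add: stop_ge_singleton)
  then show ?thesis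
    by simp
qed

end
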